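(* For any $\alpha>0$ there exists a zero-free function $f\in A^{-\infty}$ such that $1/f\in A^{-\infty}$ and $H_\lambda(D_+(f))=\infty$ for $\lambda(t)=t|\log t|^\alpha$.
   Context: $\mathbf D$ is the open unit disc and $\mathbf T$ the unit circle. $A^{-\infty}$ is the set of analytic functions $f$ in $\mathbf D$ for which there exist constants $C,k$ with $|f(z)|\le C(1-|z|)^{-k}$ for all $z\in\mathbf D$. For $f\in A^{-\infty}$, $D_+(f)=\{\theta\in[0,2\pi):\ \liminf_{r\to1}\frac{\log|f(re^{i\theta})|}{|\log(1-r)|}>0\}$ (identified with a subset of $\mathbf T$ via $\theta\mapsto e^{i\theta}$). For an increasing $\lambda$ with $\lambda(0)=0$, $H_\lambda(C)=\lim_{\epsilon\to0}\inf\{\sum_s\lambda(|J_s|): C\subset\bigcup_s J_s,\ |J_s|<\epsilon\}$, the $J_s$ being arcs of $\mathbf T$ of length $|J_s|$. *)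

theory Defs
  imports "HOL-Analysis.Analysis"
begin

definition A_neg_inf :: "(complex \<Rightarrow> complex) \<Rightarrow> bool" where
  "A_neg_inf f \<longleftrightarrow> f holomorphic_on ball 0 1 \<and>
     (\<exists>C k::real. \<forall>z\<in>ball 0 1. norm (f z) \<le> C * (1 - norm z) powr (- k))"

definition D_plus :: "(complex \<Rightarrow> complex) \<Rightarrow> real set" where
  "D_plus f = {\<theta> \<in> {0..<2*pi}.
     Liminf (at_left 1) (\<lambda>r::real. ereal (ln (norm (f (complex_of_real r * cis \<theta>))) / \<bar>ln (1 - r)\<bar>)) > 0}"

definition arc :: "real \<Rightarrow> real \<Rightarrow> complex set" where
  "arc a l = cis ` {a..a+l}"

text \<open>Hausdorff measure H_lambda of a subset of the unit circle, via countable covers by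
  arcs of length < eps; the limit eps -> 0 of a quantity increasing as eps decreases is
  written as a supremum.\<close>
definition hausdorff_lambda :: "(real \<Rightarrow> real) \<Rightarrow> complex set \<Rightarrow> ennreal" where
  "hausdorff_lambda lam C =
     (SUP \<epsilon>\<in>{0<..}. INF (a, l)\<in>{(a, l). (\<forall>n. 0 \<le> l n \<and> l n < \<epsilon>) \<and> C \<subseteq> (\<Union>n. arc (a n) (l n))}.
         (\<Sum>n. ennreal (lam (l n))))"

end

theory Submission
  imports Defs "HOL-Library.Real_Mod" "HOL-Complex_Analysis.Cauchy_Integral_Formula"
begin

(* With m j = 2 ^ (b ^ j) and b large in terms of alpha, the gap series
   g z = (SUM j. c j * z ^ m j), whose coefficients c j are the blocks of the harmonic series between
   m (j - 1) and m j, satisfies |g z| <= - ln (1 - |z|); so f = exp g and 1 / f = exp (- g) lie in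
   A^{-infinity}.  The angles psi x = (SUM j. 2 pi * d j x / m (j + 1)), built from the digits d j x of
   x in [0, 1) in a mixed radix, make every m J * psi x lie within pi / 4 of a multiple of 2 pi.  All
   terms of Re g (r * cis (psi x)) then have cosine at least 1/2, whence Re g grows like - ln (1 - r)
   and psi x lies in D_+(f).  Finally psi is strongly expanding: at scale 1 / m N it satisfies
   |x - y| <= lambda |psi x - psi y| / kappa N with kappa N -> infinity, so a cover of psi ` [0, 1) by
   short arcs J_s pulls back to a cover of [0, 1) by intervals of total length
   2 * (SUM s. lambda |J_s|) / kappa N, which forces H_lambda (D_+(f)) = infinity. *)

lemma sum_greaterThanAtMost_concat:
  fixes l u v :: nat
  assumes "l \<le> u" "u \<le> v"
  shows "sum f {l<..u} + sum f {u<..v} = sum f {l<..v}"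
  using assms by (simp add: sum.union_disjoint[symmetric] ivl_disj_un ivl_disj_int)

lemma log_series_partial_sum_le:
  fixes r :: real
  assumes "0 \<le> r" "r < 1"
  shows "(\<Sum>n\<in>{0<..N}. r ^ n / real n) \<le> - ln (1 - r)"
proof -
  have "(\<lambda>n. - ((- (- r)) ^ n) / of_nat n) sums ln (1 + (- r))"
    using assms by (intro ln_series') auto
  then have "(\<lambda>n. - (- (r ^ n / real n))) sums (- ln (1 - r))" by (intro sums_minus) simp
  then have s: "(\<lambda>n. r ^ n / real n) sums (- ln (1 - r))" by simp
  have "(\<Sum>n\<in>{0<..N}. r ^ n / real n) = (\<Sum>n<Suc N. r ^ n / real n)"
    by (intro sum.mono_neutral_left) auto
  also have "\<dots> \<le> (\<Sum>n. r ^ n / real n)"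
    using s assms by (intro sum_le_suminf) (auto simp: sums_iff)
  also have "\<dots> = - ln (1 - r)" using s by (simp add: sums_iff)
  finally show ?thesis .
qed

lemma mult_abs_ln_powr_mono:
  fixes \<alpha> t l :: real
  assumes "0 < \<alpha>" "0 < t" "t \<le> l" "l \<le> exp (- \<alpha>)"
  shows "t * \<bar>ln t\<bar> powr \<alpha> \<le> l * \<bar>ln l\<bar> powr \<alpha>"
proof -
  define s1 where "s1 = - ln l"
  define s2 where "s2 = - ln t"
  have "ln l \<le> - \<alpha>" using assms by (metis ln_exp ln_le_cancel_iff exp_gt_zero order_less_le_trans)
  then have s1: "\<alpha> \<le> s1" "s1 \<le> s2" unfolding s1_def s2_def using assms by auto
  then have s1_pos: "0 < s1" using assms(1) by linarith
  have t_eq: "t = exp (- s2)" and l_eq: "l = exp (- s1)"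
    unfolding s1_def s2_def using assms by auto
  \<comment> \<open>\<open>(s2/s1)^\<alpha> \<le> exp (\<alpha> (s2/s1 - 1)) \<le> exp (s2 - s1)\<close> because \<open>\<alpha> \<le> s1\<close>\<close>
  have "\<alpha> * ln (s2 / s1) \<le> \<alpha> * (s2 / s1 - 1)"
    using s1 s1_pos assms(1) by (intro mult_left_mono ln_le_minus_one) auto
  also have "\<dots> = (\<alpha> / s1) * (s2 - s1)" using s1_pos by (simp add: field_simps)
  also have "\<dots> \<le> s2 - s1" using s1 s1_pos assms(1) by (intro mult_left_le_one_le) auto
  finally have "(s2 / s1) powr \<alpha> \<le> exp (s2 - s1)"
    using s1 s1_pos by (simp add: powr_def mult.commute)
  then have "s2 powr \<alpha> \<le> s1 powr \<alpha> * exp (s2 - s1)"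
    using s1_pos s1 by (simp add: powr_divide divide_le_eq mult.commute)
  then have "exp (- s2) * s2 powr \<alpha> \<le> exp (- s1) * s1 powr \<alpha>"
    by (smt (verit) exp_add exp_gt_zero mult.assoc mult.commute mult_left_mono)
  moreover have "\<bar>ln t\<bar> = s2" "\<bar>ln l\<bar> = s1" using s1 s1_pos unfolding s1_def s2_def by auto
  ultimately show ?thesis using t_eq l_eq by simp
qed

lemma arc_angle_dist_le:
  assumes "cis u \<in> arc a l" "cis v \<in> arc a l" "\<bar>u - v\<bar> + l < 2 * pi"
  shows "\<bar>u - v\<bar> \<le> l"
proof -
  obtain s where s: "s \<in> {a..a+l}" "cis u = cis s" using assms(1) unfolding arc_def by auto
  obtain s' where s': "s' \<in> {a..a+l}" "cis v = cis s'" using assms(2) unfolding arc_def by auto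
  have "cis (u - s) = 1" using s(2) by (simp add: cis_divide[symmetric])
  then obtain n :: int where n: "u - s = of_int n * (2 * pi)" using cis_eq_1_iff by blast
  have "cis (v - s') = 1" using s'(2) by (simp add: cis_divide[symmetric])
  then obtain n' :: int where n': "v - s' = of_int n' * (2 * pi)" using cis_eq_1_iff by blast
  have "real_of_int (n - n') * (2 * pi) = (u - v) - (s - s')" using n n' by (simp add: algebra_simps)
  moreover have "\<bar>(u - v) - (s - s')\<bar> < 2 * pi" using assms(3) s(1) s'(1) by auto
  ultimately have "\<bar>real_of_int (n - n') * (2 * pi)\<bar> < 2 * pi" by simp
  then have "\<bar>real_of_int (n - n')\<bar> < 1" using pi_gt_zero by (simp add: abs_mult)
  then have "n = n'" by linarith
  then show ?thesis using n n' s(1) s'(1) by auto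
qed

lemma one_le_suminf_diameters_of_cover:
  fixes U :: "nat \<Rightarrow> real set"
  assumes cover: "{0..<1} \<subseteq> (\<Union>n. U n)"
    and small: "\<And>n x y. x \<in> U n \<Longrightarrow> y \<in> U n \<Longrightarrow> \<bar>y - x\<bar> \<le> d n"
  shows "1 \<le> (\<Sum>n. ennreal (2 * d n))"
proof -
  define c where "c n = (SOME x. x \<in> U n)" for n
  define V where "V n = (if U n = {} then {} else {c n - d n .. c n + d n})" for n
  have UV: "U n \<subseteq> V n" for n
  proof (cases "U n = {}")
    case False
    then have cU: "c n \<in> U n" unfolding c_def by (simp add: some_in_eq)
    show ?thesis
    proof
      fix x assume "x \<in> U n"
      then have "\<bar>x - c n\<bar> \<le> d n" using small cU by blast
      then show "x \<in> V n" unfolding V_def using False by auto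
    qed
  qed (simp add: V_def)
  have measure_V: "emeasure lborel (V n) \<le> ennreal (2 * d n)" for n
  proof (cases "U n = {}")
    case False
    then obtain x where "x \<in> U n" by blast
    then have "0 \<le> d n" using small[of x n x] by simp
    then show ?thesis unfolding V_def using False by auto
  qed (simp add: V_def)
  have V_borel: "V n \<in> sets borel" for n by (auto simp: V_def)
  have sub: "{0..<1} \<subseteq> (\<Union>n. V n)" using cover UV by blast
  have "(1::ennreal) = emeasure lborel {0..<1::real}" by simp
  also have "\<dots> \<le> emeasure lborel (\<Union>n. V n)"
    using sub V_borel by (intro emeasure_mono) auto
  also have "\<dots> \<le> (\<Sum>n. emeasure lborel (V n))"
    using V_borel by (intro emeasure_subadditive_countably) auto
  also have "\<dots> \<le> (\<Sum>n. ennreal (2 * d n))"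
    using measure_V by (intro suminf_le) auto
  finally show ?thesis .
qed

lemma hausdorff_lambda_eq_top:
  assumes "\<And>y. \<exists>\<epsilon>>0. \<forall>a l. (\<forall>n. 0 \<le> l n \<and> l n < \<epsilon>) \<longrightarrow> C \<subseteq> (\<Union>n. arc (a n) (l n))
              \<longrightarrow> ennreal y \<le> (\<Sum>n. ennreal (lam (l n)))"
  shows "hausdorff_lambda lam C = \<infinity>"
proof -
  have "\<exists>\<epsilon>\<in>{0<..}. x < (INF (a, l)\<in>{(a, l). (\<forall>n. 0 \<le> l n \<and> l n < \<epsilon>) \<and> C \<subseteq> (\<Union>n. arc (a n) (l n))}.
           (\<Sum>n. ennreal (lam (l n))))" if x_fin: "x < top" for x
  proof -
    obtain y where y: "0 \<le> y" "x = ennreal y" using x_fin by (cases x rule: ennreal_cases) auto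
    obtain \<epsilon> where \<epsilon>: "\<epsilon> > 0" and bound: "\<forall>a l. (\<forall>n. 0 \<le> l n \<and> l n < \<epsilon>) \<longrightarrow> C \<subseteq> (\<Union>n. arc (a n) (l n))
              \<longrightarrow> ennreal (y + 1) \<le> (\<Sum>n. ennreal (lam (l n)))"
      using assms by blast
    have "x < ennreal (y + 1)" using y by (simp add: ennreal_less_iff)
    also have "\<dots> \<le> (INF (a, l)\<in>{(a, l). (\<forall>n. 0 \<le> l n \<and> l n < \<epsilon>) \<and> C \<subseteq> (\<Union>n. arc (a n) (l n))}.
           (\<Sum>n. ennreal (lam (l n))))"
      using bound by (intro INF_greatest) auto
    finally show ?thesis using \<epsilon> by auto
  qed
  then show ?thesis unfolding hausdorff_lambda_def by (simp add: SUP_eq_top_iff)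
qed

lemma holomorphic_on_ball_of_summable_majorant:
  fixes c :: "nat \<Rightarrow> real" and e :: "nat \<Rightarrow> nat"
  assumes c_nonneg: "\<And>j. 0 \<le> c j"
    and summable: "\<And>r. 0 \<le> r \<Longrightarrow> r < 1 \<Longrightarrow> summable (\<lambda>j. c j * r ^ e j)"
  shows "(\<lambda>z. \<Sum>j. complex_of_real (c j) * z ^ e j) holomorphic_on ball 0 1"
proof (rule holomorphic_uniform_sequence[where f = "\<lambda>n z. \<Sum>j<n. complex_of_real (c j) * z ^ e j"])
  fix z :: complex assume z: "z \<in> ball 0 1"
  define d where "d = (1 - norm z) / 2"
  have "d > 0" using z by (simp add: d_def)
  moreover have "cball z d \<subseteq> ball 0 1"
  proof
    fix w assume "w \<in> cball z d"
    then have "norm w \<le> norm z + d" using norm_triangle_ineq2[of w z] by (auto simp: dist_norm norm_minus_commute)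
    then show "w \<in> ball 0 1" using z by (simp add: d_def field_simps)
  qed
  ultimately have d: "d > 0" "cball z d \<subseteq> ball 0 1" by auto
  have "uniform_limit (cball z d) (\<lambda>n w. \<Sum>j<n. complex_of_real (c j) * w ^ e j)
          (\<lambda>w. \<Sum>j. complex_of_real (c j) * w ^ e j) sequentially"
  proof (rule Weierstrass_m_test)
    fix n w assume "w \<in> cball z d"
    then have "norm w \<le> norm z + d" using norm_triangle_ineq2[of w z] by (auto simp: dist_norm norm_minus_commute)
    then show "norm (complex_of_real (c n) * w ^ e n) \<le> c n * (norm z + d) ^ e n"
      using c_nonneg[of n] by (simp add: norm_mult norm_power mult_left_mono power_mono)
  next
    show "summable (\<lambda>n. c n * (norm z + d) ^ e n)" using z by (intro summable) (auto simp: d_def field_simps)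
  qed
  then show "\<exists>d>0. cball z d \<subseteq> ball 0 1 \<and> uniform_limit (cball z d)
          (\<lambda>n w. \<Sum>j<n. complex_of_real (c j) * w ^ e j) (\<lambda>w. \<Sum>j. complex_of_real (c j) * w ^ e j) sequentially"
    using d by blast
qed (auto intro!: holomorphic_intros)

lemma A_neg_inf_exp:
  assumes "g holomorphic_on ball 0 1" "\<And>z. z \<in> ball 0 1 \<Longrightarrow> norm (g z) \<le> - ln (1 - norm z)"
  shows "A_neg_inf (\<lambda>z. exp (g z))"
  unfolding A_neg_inf_def
proof (intro conjI exI ballI)
  show "(\<lambda>z. exp (g z)) holomorphic_on ball 0 1" using assms(1) by (intro holomorphic_intros)
  fix z :: complex assume z: "z \<in> ball 0 1"
  have "norm (exp (g z)) \<le> exp (norm (g z))" using abs_Re_le_cmod[of "g z"] by simp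
  also have "\<dots> \<le> exp (- ln (1 - norm z))" using assms(2)[OF z] by simp
  also have "\<dots> = 1 * (1 - norm z) powr (- 1)" using z by (simp add: exp_minus powr_neg_one divide_inverse)
  finally show "norm (exp (g z)) \<le> 1 * (1 - norm z) powr (- 1)" .
qed

lemma in_D_plus_exp:
  assumes \<theta>: "\<theta> \<in> {0..<2*pi}" and "\<delta> > 0"
    and ev: "eventually (\<lambda>r. \<delta> * - ln (1 - r) \<le> Re (g (complex_of_real r * cis \<theta>))) (at_left 1)"
  shows "\<theta> \<in> D_plus (\<lambda>z. exp (g z))"
proof -
  have "eventually (\<lambda>r. ereal \<delta> \<le> ereal (ln (norm (exp (g (complex_of_real r * cis \<theta>)))) / \<bar>ln (1 - r)\<bar>))
          (at_left (1::real))"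
    using ev eventually_at_left_real[OF zero_less_one]
  proof eventually_elim
    case (elim r)
    then have "0 < - ln (1 - r)" by simp
    with elim show ?case by (simp add: field_simps)
  qed
  then have "ereal \<delta> \<le> Liminf (at_left 1)
      (\<lambda>r. ereal (ln (norm (exp (g (complex_of_real r * cis \<theta>)))) / \<bar>ln (1 - r)\<bar>))"
    by (rule Liminf_bounded)
  then show ?thesis unfolding D_plus_def using \<theta> \<open>\<delta> > 0\<close> by (auto intro: less_le_trans[of 0 "ereal \<delta>"])
qed

text \<open>\<open>b \<ge> 7\<close> keeps the exponents in \<open>P\<close> and \<open>B\<close> from being truncated, and
  \<open>b powr \<alpha> \<ge> 32\<close> makes \<open>kappa N\<close> below grow geometrically.\<close>

locale gap_construction =
  fixes b :: nat and \<alpha> :: real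
  assumes b_ge: "b \<ge> 7" and alpha_pos: "\<alpha> > 0" and b_powr_alpha_ge: "real b powr \<alpha> \<ge> 32"
begin

text \<open>A point of \<open>[0, 1)\<close> is expanded in the mixed radix \<open>B j\<close>, and its \<open>j\<close>-th digit is placed at
  the scale \<open>1 / m (Suc j)\<close>; the spare factor 16 in \<open>m (Suc j) = 16 * B j * m j\<close> is what keeps
  different expansions apart.\<close>

definition m :: "nat \<Rightarrow> nat" where "m j = 2 ^ (b ^ j)"
definition P :: "nat \<Rightarrow> nat" where "P j = 2 ^ (b ^ j - 1 - 4 * j)"
definition B :: "nat \<Rightarrow> nat" where "B j = 2 ^ (b ^ Suc j - b ^ j - 4)"

lemma b_power_ge: "b ^ k \<ge> 5 * k + 1"
proof (induction k)
  case (Suc k)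
  have "7 * b ^ k \<le> b ^ Suc k" using b_ge by simp
  then show ?case using Suc by (simp only: mult_Suc_right)
qed simp

lemma b_power_Suc_ge: "b ^ Suc j \<ge> 7 * b ^ j"
  using b_ge by simp

lemma P_Suc: "P (Suc j) = B j * P j"
proof -
  have "b ^ Suc j - 1 - 4 * Suc j = (b ^ Suc j - b ^ j - 4) + (b ^ j - 1 - 4 * j)"
    using b_power_Suc_ge[of j] b_power_ge[of j] by (simp only: mult_Suc_right)
  then show ?thesis unfolding P_def B_def by (simp add: power_add)
qed

lemma m_Suc: "m (Suc j) = 16 * B j * m j"
proof -
  have "b ^ Suc j = 4 + (b ^ Suc j - b ^ j - 4) + b ^ j"
    using b_power_Suc_ge[of j] b_power_ge[of j] by linarith
  then have "(2::nat) ^ b ^ Suc j = 2 ^ 4 * 2 ^ (b ^ Suc j - b ^ j - 4) * 2 ^ b ^ j"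
    by (metis power_add)
  then show ?thesis unfolding m_def B_def by simp
qed

lemma m_eq_P: "m j = 2 * 16 ^ j * P j"
proof -
  have "b ^ j = 1 + 4 * j + (b ^ j - 1 - 4 * j)" using b_power_ge[of j] by linarith
  then have "(2::nat) ^ b ^ j = 2 * 2 ^ (4 * j) * 2 ^ (b ^ j - 1 - 4 * j)"
    by (metis power_add power_one_right)
  then show ?thesis unfolding m_def P_def by (simp add: power_mult)
qed

lemma B_pos: "B j \<ge> 1"
  unfolding B_def by simp

lemma P_ge: "P j \<ge> 2 ^ j"
proof -
  have "j \<le> b ^ j - 1 - 4 * j" using b_power_ge[of j] by linarith
  then show ?thesis unfolding P_def by (simp add: power_increasing)
qed

lemma m_ge: "real (m j) \<ge> 2 ^ Suc j"
proof -
  have "Suc j \<le> b ^ j" using b_power_ge[of j] by linarith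
  then have "(2::nat) ^ Suc j \<le> m j" unfolding m_def by (rule power_increasing) simp
  then show ?thesis by (metis of_nat_le_iff of_nat_numeral of_nat_power)
qed

lemma m_0: "m 0 = 2"
  unfolding m_def by simp

lemma m_ge_2: "m j \<ge> 2"
proof -
  have "(2::real) \<le> 2 ^ Suc j" by simp
  then show ?thesis using m_ge[of j] by linarith
qed

lemma m_pos: "real (m j) > 0"
  using m_ge_2[of j] by simp

lemma m_add_ge: "real (m (i + J)) \<ge> 2 ^ i * real (m J)"
proof (induction i)
  case (Suc i)
  have "m (Suc (i + J)) \<ge> 2 * m (i + J)" using m_Suc[of "i + J"] B_pos[of "i + J"] by simp
  then show ?case using Suc by simp
qed simp

lemma strict_mono_m: "strict_mono m"
  unfolding m_def using b_ge by (intro strict_monoI power_strict_increasing) auto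

lemma m_dvd: "j \<le> k \<Longrightarrow> m j dvd m k"
  unfolding m_def using b_ge by (intro le_imp_power_dvd power_increasing) auto

lemma ln_m: "ln (real (m j)) = real b ^ j * ln 2"
  unfolding m_def by (simp add: ln_realpow)

section \<open>The Cantor-type map psi\<close>

definition trunc :: "nat \<Rightarrow> real \<Rightarrow> int" where "trunc j x = \<lfloor>real (P j) * x\<rfloor>"
definition digit :: "nat \<Rightarrow> real \<Rightarrow> int" where "digit j x = trunc (Suc j) x - int (B j) * trunc j x"
definition psi_term :: "nat \<Rightarrow> real \<Rightarrow> real" where "psi_term j x = 2 * pi * digit j x / real (m (Suc j))"
definition psi :: "real \<Rightarrow> real" where "psi x = (\<Sum>j. psi_term j x)"
definition psi_tail :: "nat \<Rightarrow> real \<Rightarrow> real" where "psi_tail J x = (\<Sum>i. psi_term (i + J) x)"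

lemma digit_bounds: "0 \<le> digit j x \<and> digit j x \<le> int (B j) - 1"
proof -
  define u where "u = real (P j) * x"
  have P_Suc_x: "real (P (Suc j)) * x = real (B j) * u" unfolding u_def P_Suc by simp
  have B_pos': "real (B j) > 0" using B_pos[of j] by simp
  have "real_of_int (int (B j) * \<lfloor>u\<rfloor>) \<le> real (B j) * u"
    using B_pos' by (simp add: mult_left_mono)
  then have lower: "int (B j) * \<lfloor>u\<rfloor> \<le> \<lfloor>real (B j) * u\<rfloor>" by (simp add: le_floor_iff)
  have "real (B j) * u < real_of_int (int (B j) * (\<lfloor>u\<rfloor> + 1))"
    using B_pos' by simp
  then have upper: "\<lfloor>real (B j) * u\<rfloor> < int (B j) * (\<lfloor>u\<rfloor> + 1)" by (simp add: floor_less_iff)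
  show ?thesis unfolding digit_def trunc_def P_Suc_x u_def[symmetric]
    using lower upper by (simp add: algebra_simps)
qed

lemma psi_term_nonneg: "psi_term j x \<ge> 0"
  unfolding psi_term_def using digit_bounds[of j x] by simp

lemma psi_term_le: "psi_term j x \<le> pi / (8 * real (m j))"
proof -
  have "real_of_int (digit j x) \<le> real (B j)" using digit_bounds[of j x] by linarith
  then have "psi_term j x \<le> 2 * pi * real (B j) / real (m (Suc j))"
    unfolding psi_term_def by (intro divide_right_mono mult_left_mono) auto
  also have "\<dots> = pi / (8 * real (m j))"
    unfolding m_Suc using B_pos[of j] m_pos[of j] by (simp add: field_simps)
  finally show ?thesis .
qed

lemma psi_term_add_le: "psi_term (i + J) x \<le> pi / (8 * real (m J)) * (1/2) ^ i"
proof -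
  have "pi / (8 * real (m (i + J))) \<le> pi / (8 * (2 ^ i * real (m J)))"
    using m_add_ge[of i J] m_pos[of J] m_pos[of "i + J"] by (intro divide_left_mono) auto
  also have "\<dots> = pi / (8 * real (m J)) * (1/2) ^ i" by (simp add: power_divide)
  finally show ?thesis using psi_term_le[of "i + J" x] by linarith
qed

lemma summable_psi_term: "summable (\<lambda>i. psi_term (i + J) x)"
proof (rule summable_comparison_test)
  show "\<exists>N. \<forall>i\<ge>N. norm (psi_term (i + J) x) \<le> pi / (8 * real (m J)) * (1/2) ^ i"
    using psi_term_add_le psi_term_nonneg by auto
qed simp

lemma psi_tail_bounds: "0 \<le> psi_tail J x \<and> psi_tail J x \<le> pi / (4 * real (m J))"
proof
  show "0 \<le> psi_tail J x"
    unfolding psi_tail_def using summable_psi_term psi_term_nonneg by (intro suminf_nonneg) auto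
  have "psi_tail J x \<le> (\<Sum>i. pi / (8 * real (m J)) * (1/2::real) ^ i)"
    unfolding psi_tail_def using summable_psi_term psi_term_add_le by (intro suminf_le) auto
  also have "\<dots> = pi / (4 * real (m J))"
    by (subst suminf_mult) (simp_all add: suminf_geometric)
  finally show "psi_tail J x \<le> pi / (4 * real (m J))" .
qed

lemma psi_split: "psi x = (\<Sum>j<J. psi_term j x) + psi_tail J x"
  unfolding psi_def psi_tail_def
  using suminf_split_initial_segment[OF summable_psi_term[of 0 x, simplified], of J] by simp

lemma psi_bounds: "0 \<le> psi x \<and> psi x \<le> pi / 8"
  using psi_split[of x 0] psi_tail_bounds[of 0 x] m_0 by simp

lemma m_mult_psi_partial_sum: "\<exists>k::int. real (m J) * (\<Sum>j<J. psi_term j x) = 2 * pi * k"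
proof -
  have "real (m J) * psi_term j x = 2 * pi * (digit j x * int (m J div m (Suc j)))" if "j < J" for j
  proof -
    have "m (Suc j) dvd m J" using that by (intro m_dvd) simp
    then have "real (m J) = real (m J div m (Suc j)) * real (m (Suc j))"
      by (metis dvd_div_mult_self of_nat_mult)
    then show ?thesis unfolding psi_term_def using m_pos[of "Suc j"] by (simp add: field_simps)
  qed
  then have "real (m J) * (\<Sum>j<J. psi_term j x) = 2 * pi * (\<Sum>j<J. digit j x * int (m J div m (Suc j)))"
    unfolding sum_distrib_left of_int_sum by (intro sum.cong) auto
  then show ?thesis by blast
qed

text \<open>The digits up to \<open>J\<close> put \<open>m J * psi x\<close> on a multiple of \<open>2 * pi\<close>; the later ones move it by
  at most \<open>pi / 4\<close>.\<close>
lemma cos_m_psi_ge: "cos (real (m J) * psi x) \<ge> 1/2"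
proof -
  obtain k :: int where k: "real (m J) * (\<Sum>j<J. psi_term j x) = 2 * pi * k"
    using m_mult_psi_partial_sum by blast
  define y where "y = real (m J) * psi_tail J x"
  have y: "0 \<le> y" "y \<le> pi / 4"
    using psi_tail_bounds[of J x] m_pos[of J] unfolding y_def by (auto simp: field_simps)
  have "real (m J) * psi x = y + 2 * pi * k" unfolding psi_split[of x J] y_def using k
    by (simp add: algebra_simps)
  then have "cos (real (m J) * psi x) = cos y" by (simp add: cos_add)
  also have "cos y \<ge> cos (pi / 3)" using y by (intro cos_monotone_0_pi_le) auto
  finally show ?thesis by (simp add: cos_60)
qed

lemma trunc_mono: "x \<le> y \<Longrightarrow> trunc j x \<le> trunc j y"
  unfolding trunc_def by (intro floor_mono mult_left_mono) auto

lemma trunc_0: "0 \<le> x \<Longrightarrow> x < 1 \<Longrightarrow> trunc 0 x = 0"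
  unfolding trunc_def P_def by (simp add: floor_eq_iff)

lemma trunc_differ:
  assumes "x < y"
  shows "\<exists>k. trunc k x \<noteq> trunc k y"
proof -
  obtain k where k: "1 / (y - x) < 2 ^ k" using real_arch_pow[of 2 "1 / (y - x)"] by auto
  have "real (P k) \<ge> 2 ^ k" using P_ge[of k] by (metis of_nat_le_iff of_nat_numeral of_nat_power)
  then have "1 / (y - x) < real (P k)" using k by linarith
  then have "1 < real (P k) * (y - x)" using assms by (simp add: field_simps)
  then have "\<lfloor>real (P k) * x + 1\<rfloor> \<le> \<lfloor>real (P k) * y\<rfloor>" by (intro floor_mono) (simp add: algebra_simps)
  then have "trunc k x + 1 \<le> trunc k y" unfolding trunc_def by simp
  then show ?thesis by (intro exI[of _ k]) linarith
qed

lemma first_trunc_difference: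
  assumes "0 \<le> x" "x < y" "y < 1"
  obtains K where "\<And>k. k \<le> K \<Longrightarrow> trunc k x = trunc k y" "trunc (Suc K) x < trunc (Suc K) y"
proof -
  define J where "J = (LEAST k. trunc k x \<noteq> trunc k y)"
  have J: "trunc J x \<noteq> trunc J y"
    unfolding J_def using trunc_differ[OF assms(2)] by (rule LeastI_ex)
  have below: "trunc k x = trunc k y" if "k < J" for k
    using not_less_Least[OF that[unfolded J_def]] by blast
  have "J \<noteq> 0"
  proof
    assume "J = 0"
    with J trunc_0[of x] trunc_0[of y] assms show False by simp
  qed
  then obtain K where K: "J = Suc K" using not0_implies_Suc by blast
  have "trunc J x \<le> trunc J y" using trunc_mono assms(2) by simp
  then show ?thesis using that[of K] below J K by fastforce
qed

context
  fixes K :: nat and x y :: real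
  assumes agree: "\<And>k. k \<le> K \<Longrightarrow> trunc k x = trunc k y"
    and less: "trunc (Suc K) x < trunc (Suc K) y"
begin

private abbreviation "d \<equiv> real_of_int (trunc (Suc K) y - trunc (Suc K) x)"
private abbreviation "M \<equiv> real (m (Suc K))"

lemma psi_diff_eq: "psi y - psi x = 2 * pi * (trunc (Suc K) y - trunc (Suc K) x) / real (m (Suc K))
           + (psi_tail (Suc K) y - psi_tail (Suc K) x)"
proof -
  have "psi_term j x = psi_term j y" if "j < K" for j
    unfolding psi_term_def digit_def using agree that by simp
  then have "(\<Sum>j<K. psi_term j x) = (\<Sum>j<K. psi_term j y)" by simp
  moreover have "digit K y - digit K x = trunc (Suc K) y - trunc (Suc K) x"
    unfolding digit_def using agree[of K] by simp
  then have "psi_term K y - psi_term K x = 2 * pi * (trunc (Suc K) y - trunc (Suc K) x) / real (m (Suc K))"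
    unfolding psi_term_def by (metis diff_divide_distrib of_int_diff right_diff_distrib)
  ultimately show ?thesis using psi_split[of x "Suc K"] psi_split[of y "Suc K"] by simp
qed

lemma psi_diff_ge: "5 * d / M \<le> psi y - psi x"
proof -
  have d: "d \<ge> 1" using less by simp
  have "(2 * pi - 5) * 1 \<le> (2 * pi - 5) * d" using d pi_gt3 by (intro mult_left_mono) auto
  then have "5 * d \<le> 2 * pi * d - pi / 4" using pi_gt3 by (simp add: algebra_simps)
  then have "5 * d / M \<le> (2 * pi * d - pi / 4) / M"
    using m_pos[of "Suc K"] by (intro divide_right_mono) auto
  also have "\<dots> = 2 * pi * d / M - pi / (4 * M)"
    by (simp add: diff_divide_distrib)
  also have "\<dots> \<le> psi y - psi x"
    using psi_diff_eq psi_tail_bounds[of "Suc K" x] psi_tail_bounds[of "Suc K" y] by linarith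
  finally show ?thesis .
qed

lemma psi_diff_nonneg: "0 \<le> psi y - psi x"
proof -
  have "0 \<le> 5 * d / M" using less by simp
  then show ?thesis using psi_diff_ge by linarith
qed

lemma psi_diff_le: "psi y - psi x \<le> 1 / real (m K)"
proof -
  have "d = digit K y - digit K x" unfolding digit_def using agree[of K] by simp
  then have d: "d \<le> real (B K)" using digit_bounds[of K x] digit_bounds[of K y] by linarith
  have B: "real (B K) \<ge> 1" using B_pos[of K] by simp
  have "psi y - psi x \<le> 2 * pi * d / M + pi / (4 * M)"
    using psi_diff_eq psi_tail_bounds[of "Suc K" x] psi_tail_bounds[of "Suc K" y] by linarith
  also have "\<dots> \<le> 2 * pi * real (B K) / M + pi / (4 * M)"
    using d m_pos[of "Suc K"] by (intro add_right_mono divide_right_mono) auto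
  also have "\<dots> = pi / (8 * real (m K)) + pi / (64 * real (B K) * real (m K))"
    unfolding m_Suc using B m_pos[of K] by (simp add: field_simps)
  also have "\<dots> \<le> pi / (8 * real (m K)) + pi / (8 * real (m K))"
    using B m_pos[of K] by (intro add_left_mono divide_left_mono) auto
  also have "\<dots> \<le> 1 / real (m K)"
    using pi_less_4 m_pos[of K] by (simp add: field_simps)
  finally show ?thesis .
qed

lemma diff_le_psi_diff: "y - x \<le> 16 ^ Suc K * (psi y - psi x)"
proof -
  have "real (P (Suc K)) * y < trunc (Suc K) y + 1" "trunc (Suc K) x \<le> real (P (Suc K)) * x"
    unfolding trunc_def by linarith+
  then have "real (P (Suc K)) * (y - x) < 2 * d" using less by (simp add: algebra_simps)
  moreover have "real (P (Suc K)) = M / (2 * 16 ^ Suc K)" unfolding m_eq_P by simp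
  ultimately have "y - x < (4/5) * 16 ^ Suc K * (5 * d / M)"
    using m_pos[of "Suc K"] by (simp add: field_simps)
  also have "\<dots> \<le> (4/5) * 16 ^ Suc K * (psi y - psi x)"
    using psi_diff_ge by (intro mult_left_mono) auto
  also have "\<dots> \<le> 16 ^ Suc K * (psi y - psi x)"
    using psi_diff_nonneg by (intro mult_right_mono) auto
  finally show ?thesis by (rule less_imp_le)
qed

end

lemma psi_separation:
  assumes "0 \<le> x" "x < y" "y < 1"
  obtains K where "5 / real (m (Suc K)) \<le> psi y - psi x" "psi y - psi x \<le> 1 / real (m K)"
    "y - x \<le> 16 ^ Suc K * (psi y - psi x)"
proof -
  obtain K where agree: "\<And>k. k \<le> K \<Longrightarrow> trunc k x = trunc k y"
    and less: "trunc (Suc K) x < trunc (Suc K) y"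
    using first_trunc_difference[OF assms] by blast
  have "5 / real (m (Suc K)) \<le> 5 * real_of_int (trunc (Suc K) y - trunc (Suc K) x) / real (m (Suc K))"
    using less m_pos[of "Suc K"] by (intro divide_right_mono) auto
  moreover have "5 * real_of_int (trunc (Suc K) y - trunc (Suc K) x) / real (m (Suc K)) \<le> psi y - psi x"
    using agree less by (rule psi_diff_ge)
  moreover have "psi y - psi x \<le> 1 / real (m K)"
    using agree less by (rule psi_diff_le)
  moreover have "y - x \<le> 16 ^ Suc K * (psi y - psi x)"
    using agree less by (rule diff_le_psi_diff)
  ultimately show ?thesis using that by (meson order_trans)
qed

section \<open>The Hausdorff measure of the image of psi\<close>

abbreviation lam :: "real \<Rightarrow> real" where "lam t \<equiv> t * \<bar>ln t\<bar> powr \<alpha>"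

definition kappa :: "nat \<Rightarrow> real" where
  "kappa N = ln 2 powr \<alpha> * (real b powr \<alpha>) ^ N / 16 ^ Suc N"

lemma kappa_pos: "kappa N > 0"
  unfolding kappa_def using b_ge by simp

lemma kappa_ge: "kappa N \<ge> ln 2 powr \<alpha> / 16 * 2 ^ N"
proof -
  have "(2::real) ^ N * 16 ^ N \<le> (real b powr \<alpha>) ^ N"
    using b_powr_alpha_ge by (simp add: power_mult_distrib[symmetric] power_mono)
  then have "ln 2 powr \<alpha> * (2 ^ N * 16 ^ N) \<le> ln 2 powr \<alpha> * (real b powr \<alpha>) ^ N"
    by (intro mult_left_mono) auto
  then show ?thesis unfolding kappa_def by (simp add: field_simps)
qed

lemma lam_ge_of_le_inverse_m:
  assumes "0 < t" "t \<le> 1 / real (m K)"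
  shows "t * (ln 2 powr \<alpha> * (real b powr \<alpha>) ^ K) \<le> lam t"
proof -
  have "ln t \<le> ln (1 / real (m K))" using assms m_pos[of K] by (subst ln_le_cancel_iff) auto
  then have "ln (real (m K)) \<le> - ln t" using m_pos[of K] by (simp add: ln_div)
  then have "ln (real (m K)) \<le> \<bar>ln t\<bar>" by linarith
  then have "ln (real (m K)) powr \<alpha> \<le> \<bar>ln t\<bar> powr \<alpha>"
    using m_ge_2[of K] alpha_pos by (intro powr_mono2) auto
  moreover have "ln (real (m K)) powr \<alpha> = ln 2 powr \<alpha> * (real b powr \<alpha>) ^ K"
    unfolding ln_m using b_ge by (simp add: powr_mult powr_realpow[symmetric] powr_powr mult.commute)
  ultimately show ?thesis using assms(1) by (intro mult_left_mono) auto
qed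

lemma kappa_scaled_le:
  assumes "N \<le> K"
  shows "16 ^ Suc K * kappa N \<le> ln 2 powr \<alpha> * (real b powr \<alpha>) ^ K"
proof -
  define q where "q = real b powr \<alpha>"
  have "16 ^ Suc K * kappa N = ln 2 powr \<alpha> * q ^ N * 16 ^ (K - N)"
    unfolding kappa_def q_def using assms by (simp add: field_simps power_diff)
  also have "\<dots> \<le> ln 2 powr \<alpha> * q ^ N * q ^ (K - N)"
    using b_powr_alpha_ge unfolding q_def by (intro mult_left_mono power_mono) auto
  also have "\<dots> = ln 2 powr \<alpha> * q ^ K" using assms by (simp add: power_add[symmetric])
  finally show ?thesis unfolding q_def .
qed

text \<open>The modulus of continuity of the inverse of \<open>psi\<close>: on the scale \<open>5 / m N\<close> and below,
  \<open>psi\<close> contracts distances at most by the factor \<open>lam\<close>, up to the constant \<open>kappa N\<close>.\<close>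
lemma diff_le_lam_of_psi_diff:
  assumes scale: "5 / real (m N) \<le> exp (- \<alpha>)"
    and "0 \<le> x" "x < y" "y < 1"
    and "psi y - psi x \<le> l" "l < 5 / real (m N)"
  shows "y - x \<le> lam l / kappa N"
proof -
  obtain K where K: "5 / real (m (Suc K)) \<le> psi y - psi x" "psi y - psi x \<le> 1 / real (m K)"
    "y - x \<le> 16 ^ Suc K * (psi y - psi x)"
    using psi_separation assms(2-4) by blast
  define t where "t = psi y - psi x"
  have t_pos: "t > 0" using K(1) m_pos[of "Suc K"] unfolding t_def by (smt (verit) divide_pos_pos)
  have "5 / real (m (Suc K)) < 5 / real (m N)" using K(1) assms(5,6) by linarith
  then have "m N < m (Suc K)" using m_pos[of N] m_pos[of "Suc K"] by (simp add: field_simps)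
  then have "N \<le> K" using strict_mono_less[OF strict_mono_m] by simp
  have "(y - x) * kappa N \<le> t * (16 ^ Suc K * kappa N)"
    using K(3) kappa_pos[of N] unfolding t_def by (simp add: mult_right_mono mult.commute mult.left_commute)
  also have "\<dots> \<le> t * (ln 2 powr \<alpha> * (real b powr \<alpha>) ^ K)"
    using kappa_scaled_le[OF \<open>N \<le> K\<close>] t_pos by (intro mult_left_mono) auto
  also have "\<dots> \<le> lam t" using lam_ge_of_le_inverse_m t_pos K(2) unfolding t_def by blast
  also have "\<dots> \<le> lam l"
    using t_pos assms(5,6) scale alpha_pos unfolding t_def by (intro mult_abs_ln_powr_mono) auto
  finally show ?thesis using kappa_pos[of N] by (simp add: field_simps)
qed

lemma dist_le_lam_of_psi_dist:
  assumes scale: "5 / real (m N) \<le> exp (- \<alpha>)"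
    and "x \<in> {0..<1}" "y \<in> {0..<1}"
    and psi_dist: "\<bar>psi y - psi x\<bar> \<le> l" and "l < 5 / real (m N)"
  shows "\<bar>y - x\<bar> \<le> lam l / kappa N"
proof -
  have "0 \<le> lam l / kappa N" using psi_dist kappa_pos[of N] by simp
  moreover have "x < y \<Longrightarrow> y - x \<le> lam l / kappa N" "y < x \<Longrightarrow> x - y \<le> lam l / kappa N"
    using diff_le_lam_of_psi_diff[OF scale] assms by (auto simp: abs_le_iff)
  ultimately show ?thesis by (cases "x < y"; cases "y < x") auto
qed

lemma suminf_lam_ge_of_cover:
  assumes scale: "5 / real (m N) \<le> exp (- \<alpha>)"
    and l: "\<And>n. 0 \<le> l n \<and> l n < 5 / real (m N)"
    and cover: "cis ` psi ` {0..<1} \<subseteq> (\<Union>n. arc (a n) (l n))"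
  shows "ennreal (kappa N / 2) \<le> (\<Sum>n. ennreal (lam (l n)))"
proof -
  define U where "U n = {x\<in>{0..<1}. cis (psi x) \<in> arc (a n) (l n)}" for n
  have l_lt_1: "l n < 1" for n using l[of n] scale alpha_pos by (smt (verit) exp_less_one_iff)
  have "\<bar>y - x\<bar> \<le> lam (l n) / kappa N" if "x \<in> U n" "y \<in> U n" for n x y
  proof -
    have "\<bar>psi y - psi x\<bar> \<le> l n"
      using that psi_bounds[of x] psi_bounds[of y] l_lt_1[of n] pi_gt3 unfolding U_def
      by (intro arc_angle_dist_le[of _ "a n"]) auto
    then show ?thesis using that l[of n] unfolding U_def by (intro dist_le_lam_of_psi_dist[OF scale]) auto
  qed
  moreover have "{0..<1} \<subseteq> (\<Union>n. U n)" using cover unfolding U_def by blast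
  ultimately have "1 \<le> (\<Sum>n. ennreal (2 * (lam (l n) / kappa N)))"
    by (intro one_le_suminf_diameters_of_cover) auto
  also have "\<dots> = ennreal (2 / kappa N) * (\<Sum>n. ennreal (lam (l n)))"
    using l kappa_pos[of N] by (simp add: ennreal_mult'[symmetric] ennreal_suminf_cmult[symmetric])
  finally have "ennreal (kappa N / 2) * 1 \<le> ennreal (kappa N / 2) * (ennreal (2 / kappa N) * (\<Sum>n. ennreal (lam (l n))))"
    by (intro mult_left_mono) auto
  also have "\<dots> = (\<Sum>n. ennreal (lam (l n)))"
    using kappa_pos[of N] by (simp add: ennreal_mult[symmetric] mult.assoc[symmetric])
  finally show ?thesis by simp
qed

lemma hausdorff_lambda_psi_image:
  assumes "cis ` psi ` {0..<1} \<subseteq> C"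
  shows "hausdorff_lambda lam C = \<infinity>"
proof (rule hausdorff_lambda_eq_top)
  fix y :: real
  define A where "A = ln 2 powr \<alpha> / 16"
  have A: "A > 0" unfolding A_def by simp
  obtain N where N: "2 * y / A < 2 ^ N" "5 * exp \<alpha> < 2 ^ N"
    using real_arch_pow[of 2 "max (2 * y / A) (5 * exp \<alpha>)"] by auto
  have "(2::real) ^ N \<le> 2 ^ Suc N" by simp
  then have m_N: "2 ^ N \<le> real (m N)" using m_ge[of N] by linarith
  have y: "y < kappa N / 2" using kappa_ge[of N] N(1) A unfolding A_def by (simp add: field_simps)
  have "5 * exp \<alpha> \<le> real (m N)" using N(2) m_N by linarith
  then have scale: "5 / real (m N) \<le> exp (- \<alpha>)" using m_pos[of N] by (simp add: field_simps exp_minus)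
  have "ennreal y \<le> (\<Sum>n. ennreal (lam (l n)))"
    if "\<forall>n. 0 \<le> l n \<and> l n < 5 / real (m N)" "C \<subseteq> (\<Union>n. arc (a n) (l n))" for a l
  proof -
    have "ennreal y \<le> ennreal (kappa N / 2)" using y by (intro ennreal_leI) simp
    also have "\<dots> \<le> (\<Sum>n. ennreal (lam (l n)))"
      using that assms by (intro suminf_lam_ge_of_cover[OF scale, where a = a]) auto
    finally show ?thesis .
  qed
  then show "\<exists>\<epsilon>>0. \<forall>a l. (\<forall>n. 0 \<le> l n \<and> l n < \<epsilon>) \<longrightarrow> C \<subseteq> (\<Union>n. arc (a n) (l n))
              \<longrightarrow> ennreal y \<le> (\<Sum>n. ennreal (lam (l n)))"
    using m_pos[of N] by (intro exI[of _ "5 / real (m N)"]) auto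
qed

section \<open>The gap series\<close>

definition m_prev :: "nat \<Rightarrow> nat" where "m_prev j = (if j = 0 then 0 else m (j - 1))"
definition coeff :: "nat \<Rightarrow> real" where "coeff j = (\<Sum>n\<in>{m_prev j<..m j}. 1 / real n)"
definition g :: "complex \<Rightarrow> complex" where "g z = (\<Sum>j. complex_of_real (coeff j) * z ^ m j)"

lemma m_prev_Suc: "m_prev (Suc j) = m j"
  unfolding m_prev_def by simp

lemma m_prev_le: "m_prev j \<le> m j"
  unfolding m_prev_def using strict_mono_less_eq[OF strict_mono_m, of "j - 1" j] by auto

lemma coeff_nonneg: "coeff j \<ge> 0"
  unfolding coeff_def by (intro sum_nonneg) auto

lemma sum_coeff_eq_harm: "(\<Sum>j<J. coeff j) = harm (m_prev J)"
proof (induction J)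
  case 0
  then show ?case by (simp add: m_prev_def harm_def)
next
  case (Suc J)
  have harm_eq: "harm n = (\<Sum>k\<in>{0<..n}. 1 / real k)" for n
    unfolding harm_def by (intro sum.cong) (auto simp: divide_inverse)
  show ?case
    using Suc sum_greaterThanAtMost_concat[OF _ m_prev_le[of J], of 0 "\<lambda>n. 1 / real n"]
    by (simp add: harm_eq coeff_def m_prev_Suc)
qed

lemma coeff_partial_sum_le:
  assumes "0 \<le> r" "r \<le> 1"
  shows "(\<Sum>j<J. coeff j * r ^ m j) \<le> (\<Sum>n\<in>{0<..m_prev J}. r ^ n / real n)"
proof (induction J)
  case (Suc J)
  have "coeff J * r ^ m J = (\<Sum>n\<in>{m_prev J<..m J}. r ^ m J / real n)"
    unfolding coeff_def sum_distrib_right by simp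
  also have "\<dots> \<le> (\<Sum>n\<in>{m_prev J<..m J}. r ^ n / real n)"
    using assms by (intro sum_mono divide_right_mono power_decreasing) auto
  finally show ?case
    using Suc sum_greaterThanAtMost_concat[OF _ m_prev_le[of J], of 0 "\<lambda>n. r ^ n / real n"]
    by (simp add: m_prev_Suc)
qed (simp add: m_prev_def)

lemma coeff_series:
  assumes "0 \<le> r" "r < 1"
  shows "summable (\<lambda>j. coeff j * r ^ m j)" "(\<Sum>j. coeff j * r ^ m j) \<le> - ln (1 - r)"
proof -
  have bound: "(\<Sum>j<J. coeff j * r ^ m j) \<le> - ln (1 - r)" for J
    using coeff_partial_sum_le[of r J] log_series_partial_sum_le[of r "m_prev J"] assms by linarith
  show "summable (\<lambda>j. coeff j * r ^ m j)"
    using assms coeff_nonneg by (intro summableI_nonneg_bounded[OF _ bound]) auto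
  then show "(\<Sum>j. coeff j * r ^ m j) \<le> - ln (1 - r)"
    using bound by (intro suminf_le_const)
qed

lemma summable_g_norm:
  assumes "norm z < 1"
  shows "summable (\<lambda>j. norm (complex_of_real (coeff j) * z ^ m j))"
  using coeff_series(1)[of "norm z"] assms coeff_nonneg by (simp add: norm_mult norm_power)

lemma norm_g_le:
  assumes "norm z < 1"
  shows "norm (g z) \<le> - ln (1 - norm z)"
proof -
  have "norm (g z) \<le> (\<Sum>j. norm (complex_of_real (coeff j) * z ^ m j))"
    unfolding g_def using summable_g_norm[OF assms] by (rule summable_norm)
  also have "\<dots> = (\<Sum>j. coeff j * norm z ^ m j)"
    using coeff_nonneg by (simp add: norm_mult norm_power)
  also have "\<dots> \<le> - ln (1 - norm z)" using coeff_series(2)[of "norm z"] assms by simp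
  finally show ?thesis .
qed

lemma g_holomorphic: "g holomorphic_on ball 0 1"
  unfolding g_def[abs_def] using coeff_nonneg coeff_series(1)
  by (intro holomorphic_on_ball_of_summable_majorant)

lemma Re_g_psi_ge:
  assumes "0 \<le> r" "r < 1"
  shows "(\<Sum>j. coeff j * r ^ m j) / 2 \<le> Re (g (complex_of_real r * cis (psi x)))"
proof -
  define z where "z = complex_of_real r * cis (psi x)"
  have "norm z < 1" using assms unfolding z_def by (simp add: norm_mult)
  then have "summable (\<lambda>j. complex_of_real (coeff j) * z ^ m j)"
    by (rule summable_norm_cancel[OF summable_g_norm])
  then have sums_Re_g: "(\<lambda>j. Re (complex_of_real (coeff j) * z ^ m j)) sums Re (g z)"
    unfolding g_def by (intro sums_Re summable_sums)
  have "z ^ m j = complex_of_real (r ^ m j) * cis (real (m j) * psi x)" for j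
    unfolding z_def by (simp add: power_mult_distrib Complex.DeMoivre)
  then have "(\<lambda>j. Re (complex_of_real (coeff j) * z ^ m j)) = (\<lambda>j. coeff j * r ^ m j * cos (real (m j) * psi x))"
    by (simp add: mult.assoc)
  with sums_Re_g have Re_g: "(\<lambda>j. coeff j * r ^ m j * cos (real (m j) * psi x)) sums Re (g z)" by simp
  have le: "coeff j * r ^ m j / 2 \<le> coeff j * r ^ m j * cos (real (m j) * psi x)" for j
    using mult_left_mono[OF cos_m_psi_ge[of j x], of "coeff j * r ^ m j"] coeff_nonneg[of j] assms by simp
  have "(\<lambda>j. coeff j * r ^ m j / 2) sums ((\<Sum>j. coeff j * r ^ m j) / 2)"
    using coeff_series(1)[OF assms] by (intro sums_divide summable_sums)
  from sums_le[OF le this Re_g] show ?thesis unfolding z_def .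
qed

lemma coeff_series_ge:
  assumes "0 \<le> r" "r < 1" and J: "real (m J) * (1 - r) \<le> 1/2"
  shows "ln (real (m J)) / 2 \<le> (\<Sum>j. coeff j * r ^ m j)"
proof -
  have "1 - real (m J) * (1 - r) \<le> r ^ m J"
    using Bernoulli_inequality[of "r - 1" "m J"] assms by (simp add: algebra_simps)
  then have r_pow: "1/2 \<le> r ^ m J" using J by linarith
  have "ln (real (m J)) \<le> ln (real (m J) + 1)" using m_pos[of J] by simp
  also have "\<dots> \<le> harm (m J)" by (rule ln_le_harm)
  also have "\<dots> = (\<Sum>j<Suc J. coeff j)" by (simp only: sum_coeff_eq_harm m_prev_Suc)
  finally have "ln (real (m J)) / 2 \<le> (\<Sum>j<Suc J. coeff j) * (1/2)" by simp
  also have "\<dots> \<le> (\<Sum>j<Suc J. coeff j) * r ^ m J"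
    using r_pow coeff_nonneg by (intro mult_left_mono sum_nonneg) auto
  also have "\<dots> \<le> (\<Sum>j<Suc J. coeff j * r ^ m j)"
    unfolding sum_distrib_right using assms coeff_nonneg strict_mono_less_eq[OF strict_mono_m]
    by (intro sum_mono mult_left_mono power_decreasing) auto
  also have "\<dots> \<le> (\<Sum>j. coeff j * r ^ m j)"
    using coeff_series(1)[OF assms(1,2)] coeff_nonneg assms by (intro sum_le_suminf) auto
  finally show ?thesis .
qed

lemma scale_of_radius:
  assumes "3/4 < r" "r < 1"
  obtains J where "real (m J) * (1 - r) \<le> 1/2" "1 / (1 - r) < 2 * real (m (Suc J))"
proof -
  define X where "X = 1 / (2 * (1 - r))"
  have X: "X > 2" unfolding X_def using assms by (simp add: field_simps)
  obtain k where "X < 2 ^ k" using real_arch_pow[of 2 X] by auto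
  moreover have "(2::real) ^ k \<le> 2 ^ Suc (Suc k)" by simp
  ultimately have "\<exists>k. X < real (m (Suc k))" using m_ge[of "Suc k"] by (intro exI[of _ k]) linarith
  then have J1: "X < real (m (Suc J))" if "J = (LEAST k. X < real (m (Suc k)))" for J
    unfolding that by (rule LeastI_ex)
  have J2: "real (m J) \<le> X" if "J = (LEAST k. X < real (m (Suc k)))" for J
  proof (cases J)
    case 0
    then show ?thesis using X m_0 by simp
  next
    case (Suc J')
    then show ?thesis using not_less_Least[of J' "\<lambda>k. X < real (m (Suc k))"] that by simp
  qed
  show ?thesis using J1 J2 assms unfolding X_def by (intro that) (auto simp: field_simps)
qed

lemma Re_g_psi_ge_ln:
  assumes "3/4 < r" "r < 1"
  shows "- ln (1 - r) / (4 * (real b + 1)) \<le> Re (g (complex_of_real r * cis (psi x)))"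
proof -
  obtain J where J: "real (m J) * (1 - r) \<le> 1/2" "1 / (1 - r) < 2 * real (m (Suc J))"
    using scale_of_radius[OF assms] .
  have "- ln (1 - r) = ln (1 / (1 - r))" using assms by (simp add: ln_div)
  also have "\<dots> < ln (2 * real (m (Suc J)))" using J(2) assms m_ge_2[of "Suc J"] by (subst ln_less_cancel_iff) auto
  also have "\<dots> = ln 2 + real b * ln (real (m J))"
    using m_pos[of "Suc J"] by (simp add: ln_mult ln_m)
  also have "\<dots> \<le> (real b + 1) * ln (real (m J))"
    using m_ge_2[of J] by (simp add: algebra_simps)
  finally have "- ln (1 - r) / (4 * (real b + 1)) \<le> ln (real (m J)) / 4"
    by (simp add: field_simps)
  also have "\<dots> \<le> (\<Sum>j. coeff j * r ^ m j) / 2"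
    using coeff_series_ge[OF _ assms(2) J(1)] assms by simp
  also have "\<dots> \<le> Re (g (complex_of_real r * cis (psi x)))"
    using assms by (intro Re_g_psi_ge) auto
  finally show ?thesis .
qed

lemma psi_in_D_plus:
  assumes "x \<in> {0..<1}"
  shows "psi x \<in> D_plus (\<lambda>z. exp (g z))"
proof (rule in_D_plus_exp)
  have "0 \<le> psi x" "psi x \<le> pi / 8" using psi_bounds[of x] by auto
  then show "psi x \<in> {0..<2*pi}" using pi_gt_zero unfolding atLeastLessThan_iff by linarith
  show "eventually (\<lambda>r. 1 / (4 * (real b + 1)) * - ln (1 - r) \<le> Re (g (complex_of_real r * cis (psi x))))
          (at_left 1)"
  proof -
    have "eventually (\<lambda>r. r \<in> {3/4<..<1}) (at_left (1::real))"
      by (rule eventually_at_left_real) simp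
    then show ?thesis by eventually_elim (use Re_g_psi_ge_ln in auto)
  qed
qed simp

end

theorem proposition2:
  fixes \<alpha> :: real
  assumes "\<alpha> > 0"
  shows "\<exists>f. A_neg_inf f \<and> (\<forall>z\<in>ball 0 1. f z \<noteq> 0) \<and> A_neg_inf (\<lambda>z. inverse (f z)) \<and>
             hausdorff_lambda (\<lambda>t. t * \<bar>ln t\<bar> powr \<alpha>) (cis ` D_plus f) = \<infinity>"
proof -
  define b :: nat where "b = nat \<lceil>32 powr (1 / \<alpha>)\<rceil> + 7"
  have "32 powr (1 / \<alpha>) \<le> real b" unfolding b_def by linarith
  then have "(32 powr (1 / \<alpha>)) powr \<alpha> \<le> real b powr \<alpha>" using assms by (intro powr_mono2) auto
  then have "real b powr \<alpha> \<ge> 32" using assms by (simp add: powr_powr)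
  then interpret gap_construction b \<alpha> using assms by unfold_locales (auto simp: b_def)
  have "A_neg_inf (\<lambda>z. exp (g z))" "A_neg_inf (\<lambda>z. exp (- g z))"
    using g_holomorphic norm_g_le by (intro A_neg_inf_exp holomorphic_intros; simp)+
  moreover have "cis ` psi ` {0..<1} \<subseteq> cis ` D_plus (\<lambda>z. exp (g z))"
    using psi_in_D_plus by blast
  ultimately show ?thesis
    using hausdorff_lambda_psi_image by (intro exI[of _ "\<lambda>z. exp (g z)"]) (simp add: exp_minus)
qed

end
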